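(* Let $p>3$ be a prime, $q=p^h$, and $a,b\in\mathbb{F}_{q^2}^*$. If there exist $A,B,C,D\in\overline{\mathbb{F}_q}$ such that $$F_{a,b}(X,Y)=-b\bigl(XY+A(X+Y)+C\bigr)\bigl(XY+B(X+Y)+D\bigr),$$ then $N_{a,b}(X)$ and $D_{a,b}(X)$ have a nonconstant common factor.
   Context: $N_{a,b}(X)=a^qX^3+X^2+b^q$, $D_{a,b}(X)=bX^3+X+a$, and $$F_{a,b}(X,Y)=\frac{N_{a,b}(X)D_{a,b}(Y)-N_{a,b}(Y)D_{a,b}(X)}{X-Y}\in\mathbb{F}_{q^2}[X,Y].$$ *)

theory Defs
  imports "HOL-Computational_Algebra.Computational_Algebra"
begin

definition Npoly :: "nat \<Rightarrow> 'k::field \<Rightarrow> 'k \<Rightarrow> 'k poly" where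
  "Npoly q a b = [: b ^ q, 0, 1, a ^ q :]"

definition Dpoly :: "'k::field \<Rightarrow> 'k \<Rightarrow> 'k poly" where
  "Dpoly a b = [: a, 1, 0, b :]"

(* Bivariate polynomials in k[X,Y] are represented as ('k poly) poly:
   the outer variable is Y, the coefficients are polynomials in X. *)
definition polyX :: "'k::zero poly \<Rightarrow> 'k poly poly" where
  "polyX f = [: f :]"

definition polyY :: "'k::zero poly \<Rightarrow> 'k poly poly" where
  "polyY f = map_poly (\<lambda>c. [: c :]) f"

definition XminusY :: "'k::comm_ring_1 poly poly" where
  "XminusY = [: [:0, 1:], -1 :]"

definition Fpoly :: "nat \<Rightarrow> 'k::field \<Rightarrow> 'k \<Rightarrow> 'k poly poly" where
  "Fpoly q a b =
     (polyX (Npoly q a b) * polyY (Dpoly a b) - polyY (Npoly q a b) * polyX (Dpoly a b))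
       div XminusY"

definition quadXY :: "'k::comm_ring_1 \<Rightarrow> 'k \<Rightarrow> 'k poly poly" where
  "quadXY A C = [: [:C, A:], [:A, 1:] :]"

definition alg_closed_field :: "'k::field itself \<Rightarrow> bool" where
  "alg_closed_field _ \<longleftrightarrow> (\<forall>f :: 'k poly. degree f > 0 \<longrightarrow> (\<exists>x. poly f x = 0))"

(* 'k is an algebraic closure of F_p: algebraically closed of characteristic p,
   and every element is algebraic over F_p (lies in some finite field F_{p^n}). *)
definition is_alg_closure_Fp :: "'k::field itself \<Rightarrow> nat \<Rightarrow> bool" where
  "is_alg_closure_Fp T p \<longleftrightarrow> CHAR('k) = p \<and> alg_closed_field T \<and>
      (\<forall>x::'k. \<exists>n>0. x ^ (p ^ n) = x)"

end

theory Submission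
  imports Defs
begin

text \<open>Both sides of the assumed factorization are polynomials of bidegree at most (2,2), so
  comparing their nine coefficients gives five polynomial identities in \<open>a, b, A, B, C, D\<close>.
  Eliminating \<open>a\<^sup>q\<close> and \<open>b\<^sup>q\<close> leaves \<open>b (A\<^sup>2 - C)(B\<^sup>2 - D) = 0\<close>, and if \<open>C = A\<^sup>2\<close> the
  same identities make \<open>-A\<close> a common root of \<open>N\<^sub>a\<^sub>,\<^sub>b\<close> and \<open>D\<^sub>a\<^sub>,\<^sub>b\<close>.\<close>

lemma Fpoly_eq:
  fixes q :: nat and a b :: "'k::field"
  defines "k \<equiv> a ^ q * a - b ^ q * b"
  shows "Fpoly q a b =
    [: [:-(b ^ q), a, k:], [:a, k + 1, a ^ q:], [:k, a ^ q, -b:] :]"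
proof -
  have "XminusY \<noteq> (0 :: 'k poly poly)"
    by (simp add: XminusY_def)
  moreover have "polyX (Npoly q a b) * polyY (Dpoly a b) - polyY (Npoly q a b) * polyX (Dpoly a b)
    = XminusY * [: [:-(b ^ q), a, k:], [:a, k + 1, a ^ q:], [:k, a ^ q, -b:] :]"
    by (simp add: k_def Npoly_def Dpoly_def polyX_def polyY_def XminusY_def
        map_poly_pCons algebra_simps)
  ultimately show ?thesis
    unfolding Fpoly_def by (metis nonzero_mult_div_cancel_left)
qed

lemma const_mult_quadXY_mult_quadXY:
  fixes b A B C D :: "'k::comm_ring_1"
  shows "[:[: - b :]:] * quadXY A C * quadXY B D =
    [: [:-b*C*D, -b*(A*D+B*C), -b*A*B:],
       [:-b*(A*D+B*C), -b*(2*A*B+C+D), -b*(A+B):],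
       [:-b*A*B, -b*(A+B), -b:] :]"
  by (simp add: quadXY_def algebra_simps)

lemma Fpoly_factorization_coeffs:
  fixes a b A B C D :: "'k::field"
  assumes "Fpoly q a b = [:[: - b :]:] * quadXY A C * quadXY B D"
  shows "a ^ q = -b*(A+B)" and "b ^ q = b*C*D" and "a = -b*(A*D+B*C)"
    and "a ^ q * a - b ^ q * b = -b*A*B" and "1 = -b*(A*B+C+D)"
proof -
  have k: "a ^ q * a - b ^ q * b = -b*A*B"
    and k1: "a ^ q * a - b ^ q * b + 1 = -b*(2*A*B+C+D)"
    using assms unfolding Fpoly_eq const_mult_quadXY_mult_quadXY by auto
  show "a ^ q = -b*(A+B)" and "b ^ q = b*C*D" and "a = -b*(A*D+B*C)"
    using assms unfolding Fpoly_eq const_mult_quadXY_mult_quadXY by auto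
  show "a ^ q * a - b ^ q * b = -b*A*B"
    by (fact k)
  show "1 = -b*(A*B+C+D)"
    using k1 unfolding k by (simp add: algebra_simps)
qed

lemma Fpoly_factorization_square:
  fixes a b A B C D :: "'k::field"
  assumes "b \<noteq> 0" and "Fpoly q a b = [:[: - b :]:] * quadXY A C * quadXY B D"
  shows "C = A ^ 2 \<or> D = B ^ 2"
proof -
  define al be where "al = a ^ q" and "be = b ^ q"
  note eqs = Fpoly_factorization_coeffs[OF assms(2), folded al_def be_def]
  have "b * (b * ((A ^ 2 - C) * (B ^ 2 - D))) = 0"
    using eqs by algebra
  then show ?thesis
    using assms(1) by auto
qed

lemma Fpoly_factorization_common_root:
  fixes a b A B C D :: "'k::field"
  assumes "Fpoly q a b = [:[: - b :]:] * quadXY A C * quadXY B D" and "C = A ^ 2"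
  shows "poly (Npoly q a b) (-A) = 0" and "poly (Dpoly a b) (-A) = 0"
proof -
  define al be where "al = a ^ q" and "be = b ^ q"
  note eqs = Fpoly_factorization_coeffs[OF assms(1), folded al_def be_def]
  show "poly (Npoly q a b) (-A) = 0"
    using eqs assms(2) unfolding Npoly_def al_def[symmetric] be_def[symmetric]
    by (simp add: algebra_simps) algebra
  show "poly (Dpoly a b) (-A) = 0"
    using eqs assms(2) unfolding Dpoly_def
    by (simp add: algebra_simps) algebra
qed

lemma common_root_imp_common_factor:
  fixes f g :: "'k::field poly"
  assumes "poly f x = 0" and "poly g x = 0"
  shows "\<exists>d. degree d > 0 \<and> d dvd f \<and> d dvd g"
  using assms by (intro exI[of _ "[:-x, 1:]"]) (simp add: poly_eq_0_iff_dvd)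

theorem mainTheorem9:
  fixes p h q :: nat and a b A B C D :: "'k::field"
  assumes "prime p" and "p > 3" and "h > 0" and "q = p ^ h"
    and "is_alg_closure_Fp TYPE('k) p"
    and "a \<noteq> 0" and "b \<noteq> 0" and "a ^ (q ^ 2) = a" and "b ^ (q ^ 2) = b"
    and "Fpoly q a b = [:[: - b :]:] * quadXY A C * quadXY B D"
  shows "\<exists>g :: 'k poly. degree g > 0 \<and> g dvd Npoly q a b \<and> g dvd Dpoly a b"
proof -
  have swapped: "Fpoly q a b = [:[: - b :]:] * quadXY B D * quadXY A C"
    using assms(10) by (simp add: mult.assoc mult.commute)
  from Fpoly_factorization_square[OF assms(7,10)]
  show ?thesis
  proof
    assume "C = A ^ 2"
    with Fpoly_factorization_common_root[OF assms(10)] show ?thesis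
      by (blast intro: common_root_imp_common_factor)
  next
    assume "D = B ^ 2"
    with Fpoly_factorization_common_root[OF swapped] show ?thesis
      by (blast intro: common_root_imp_common_factor)
  qed
qed

end
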